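(* Suppose $\psi\in\Psi^*$ and $s\in\Omega_2$. Then $\dfrac{F'}{F}(s,\psi)\ll\mathcal{L}\log\mathcal{L}$, where $'$ denotes differentiation in $s$.
   Context: Standing conventions: $\chi$ is a real primitive Dirichlet character of modulus $D$, where $D$ exceeds a sufficiently large absolute constant; implied constants are absolute. $\mathcal{L}=\log D$, $Q=\exp(\mathcal{L}^2)$, $\alpha=\mathcal{L}^{-2}$, $s_0=\tfrac12+iD$. Let $\mathcal{Q}$ be the set of integers $q$ with $Q<q<2Q$, $\gcd(q,6)=1$, $q$ squarefree; $\Psi_q$ the set of primitive characters $\psi\bmod q$ with $\psi\chi$ primitive modulo $\mathrm{lcm}(q,D)$; $\Psi=\bigcup_q\Psi_q$. Define $\nu,\upsilon$ by $\sum\nu(n)n^{-s}=\zeta(s)L(s,\chi)$, $\sum\upsilon(n)n^{-s}=\zeta(s)^{-1}L(s,\chi)^{-1}$; $F(s,\psi)=\sum_{n\le D^5}\nu(n)\psi(n)n^{-s}$, $G(s,\psi)=\sum_{n\le D^5}\upsilon(n)\psi(n)n^{-s}$; $\Delta(s,\psi)=L(s,\psi)/L(1-s,\bar\psi)$, $\Delta_1(s,\psi)=\Delta(s,\psi)\Delta(s,\psi\chi)$, $\mathcal{F}(s,\psi)=F(s,\psi)+\Delta_1(s,\psi)F(1-s,\bar\psi)$. $\Omega_1=\{s:-2\alpha^{1/2}<\mathrm{Re}(s-s_0)<1,\ |\mathrm{Im}(s-s_0)|<1+20\mathcal{L}\}$, $\Omega_2=\{s:-\tfrac1{10}\alpha\log\mathcal{L}<\mathrm{Re}(s-s_0)<\tfrac12,\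 |\mathrm{Im}(s-s_0)|<1+10\mathcal{L}\}$. $\Psi^*$ is the set of $\psi\in\Psi$ with (I1) $\sup_{\Omega_1}\{|F(s,\psi)|+|G(s,\psi)|\}<\mathcal{L}^3\log\mathcal{L}$, (I2) $\sup_{\Omega_1}|F(s,\psi)G(s,\psi)-1|<\tfrac12$, (I3) $\sup_{\Omega_2}|L(s,\psi)L(s,\psi\chi)-\mathcal{F}(s,\psi)|<\mathcal{L}^{-24/5}$. *)

theory Defs
  imports "HOL-Analysis.Analysis" "HOL-Computational_Algebra.Squarefree"
    "HOL-Number_Theory.Cong"
begin

definition dchar :: "nat \<Rightarrow> (nat \<Rightarrow> complex) \<Rightarrow> bool" where
  "dchar q \<psi> \<longleftrightarrow> q > 0 \<and> \<psi> 1 = 1 \<and> (\<forall>m n. \<psi> (m * n) = \<psi> m * \<psi> n)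
     \<and> (\<forall>n. \<psi> (n + q) = \<psi> n) \<and> (\<forall>n. \<psi> n = 0 \<longleftrightarrow> \<not> coprime n q)"

definition primitive_char :: "nat \<Rightarrow> (nat \<Rightarrow> complex) \<Rightarrow> bool" where
  "primitive_char q \<psi> \<longleftrightarrow> dchar q \<psi> \<and>
     \<not> (\<exists>d. d dvd q \<and> d < q \<and> (\<forall>n. coprime n q \<and> [n = 1] (mod d) \<longrightarrow> \<psi> n = 1))"

definition real_primitive_char :: "nat \<Rightarrow> (nat \<Rightarrow> complex) \<Rightarrow> bool" where
  "real_primitive_char D chi \<longleftrightarrow> primitive_char D chi \<and> (\<forall>n. chi n \<in> Reals)"

definition cnj_char :: "(nat \<Rightarrow> complex) \<Rightarrow> nat \<Rightarrow> complex" where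
  "cnj_char \<psi> = (\<lambda>n. cnj (\<psi> n))"

definition mult_char :: "(nat \<Rightarrow> complex) \<Rightarrow> (nat \<Rightarrow> complex) \<Rightarrow> nat \<Rightarrow> complex" where
  "mult_char \<psi> chi = (\<lambda>n. \<psi> n * chi n)"

definition moebius :: "nat \<Rightarrow> complex" where
  "moebius n = (if n > 0 \<and> squarefree n then (-1) ^ card (prime_factors n) else 0)"

text \<open>Coefficients of zeta(s) L(s,chi) and of its reciprocal (Dirichlet convolutions).\<close>
definition nu :: "(nat \<Rightarrow> complex) \<Rightarrow> nat \<Rightarrow> complex" where
  "nu chi n = (\<Sum>d\<in>{d. d dvd n}. chi d)"

definition upsilon :: "(nat \<Rightarrow> complex) \<Rightarrow> nat \<Rightarrow> complex" where
  "upsilon chi n = (\<Sum>d\<in>{d. d dvd n}. moebius d * moebius (n div d) * chi (n div d))"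

definition LL :: "nat \<Rightarrow> real" where "LL D = ln (real D)"
definition QQ :: "nat \<Rightarrow> real" where "QQ D = exp ((LL D)^2)"
definition alpha :: "nat \<Rightarrow> real" where "alpha D = (LL D) powr (-2)"
definition s0 :: "nat \<Rightarrow> complex" where "s0 D = 1/2 + \<i> * of_nat D"

definition Qset :: "nat \<Rightarrow> nat set" where
  "Qset D = {q. QQ D < real q \<and> real q < 2 * QQ D \<and> coprime q 6 \<and> squarefree q}"

definition PsiSet :: "nat \<Rightarrow> (nat \<Rightarrow> complex) \<Rightarrow> (nat \<Rightarrow> complex) set" where
  "PsiSet D chi = {\<psi>. \<exists>q\<in>Qset D. primitive_char q \<psi> \<and>
                   primitive_char (lcm q D) (mult_char \<psi> chi)}"

definition FF :: "nat \<Rightarrow> (nat \<Rightarrow> complex) \<Rightarrow> (nat \<Rightarrow> complex) \<Rightarrow> complex \<Rightarrow> complex" where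
  "FF D chi \<psi> s = (\<Sum>n=1..D^5. nu chi n * \<psi> n * of_nat n powr (-s))"

definition GG :: "nat \<Rightarrow> (nat \<Rightarrow> complex) \<Rightarrow> (nat \<Rightarrow> complex) \<Rightarrow> complex \<Rightarrow> complex" where
  "GG D chi \<psi> s = (\<Sum>n=1..D^5. upsilon chi n * \<psi> n * of_nat n powr (-s))"

text \<open>L(s,psi) as the limit of partial sums of the Dirichlet series; for non-principal
  psi this is the analytic continuation on Re s > 0, which contains every point where it is used.\<close>
definition Lfun :: "(nat \<Rightarrow> complex) \<Rightarrow> complex \<Rightarrow> complex" where
  "Lfun \<psi> s = lim (\<lambda>N. \<Sum>n=1..N. \<psi> n * of_nat n powr (-s))"

definition Delta :: "(nat \<Rightarrow> complex) \<Rightarrow> complex \<Rightarrow> complex" where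
  "Delta \<psi> s = Lfun \<psi> s / Lfun (cnj_char \<psi>) (1 - s)"

definition Delta1 :: "(nat \<Rightarrow> complex) \<Rightarrow> (nat \<Rightarrow> complex) \<Rightarrow> complex \<Rightarrow> complex" where
  "Delta1 chi \<psi> s = Delta \<psi> s * Delta (mult_char \<psi> chi) s"

definition FFcal :: "nat \<Rightarrow> (nat \<Rightarrow> complex) \<Rightarrow> (nat \<Rightarrow> complex) \<Rightarrow> complex \<Rightarrow> complex" where
  "FFcal D chi \<psi> s = FF D chi \<psi> s + Delta1 chi \<psi> s * FF D chi (cnj_char \<psi>) (1 - s)"

definition Omega1 :: "nat \<Rightarrow> complex set" where
  "Omega1 D = {s. - 2 * sqrt (alpha D) < Re (s - s0 D) \<and> Re (s - s0 D) < 1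
                  \<and> \<bar>Im (s - s0 D)\<bar> < 1 + 20 * LL D}"

definition Omega2 :: "nat \<Rightarrow> complex set" where
  "Omega2 D = {s. - (1/10) * alpha D * ln (LL D) < Re (s - s0 D) \<and> Re (s - s0 D) < 1/2
                  \<and> \<bar>Im (s - s0 D)\<bar> < 1 + 10 * LL D}"

definition PsiStar :: "nat \<Rightarrow> (nat \<Rightarrow> complex) \<Rightarrow> (nat \<Rightarrow> complex) set" where
  "PsiStar D chi = {\<psi>. \<psi> \<in> PsiSet D chi
     \<and> (SUP s\<in>Omega1 D. ereal (norm (FF D chi \<psi> s) + norm (GG D chi \<psi> s)))
          < ereal ((LL D)^3 * ln (LL D))
     \<and> (SUP s\<in>Omega1 D. ereal (norm (FF D chi \<psi> s * GG D chi \<psi> s - 1))) < ereal (1/2)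
     \<and> (SUP s\<in>Omega2 D. ereal (norm (Lfun \<psi> s * Lfun (mult_char \<psi> chi) s - FFcal D chi \<psi> s)))
          < ereal ((LL D) powr (-24/5))}"

end

theory Submission
  imports Defs "HOL-Complex_Analysis.Complex_Analysis"
begin

text \<open>
  By (I1) and (I2), \<open>1/(2B) < \<bar>F\<bar> < B\<close> on \<open>\<Omega>\<^sub>1\<close> with \<open>B = \<L>\<^sup>3 log \<L>\<close>, so \<open>F\<close> has a
  holomorphic logarithm \<open>g\<close> there with \<open>\<bar>Re g\<bar> \<le> log (2B) \<le> 5 log \<L>\<close>. The disc of radius
  \<open>1/\<L>\<close> around any \<open>s \<in> \<Omega>\<^sub>2\<close> lies in \<open>\<Omega>\<^sub>1\<close>, and a holomorphic function on a disc of
  radius \<open>r\<close> whose real part is bounded by \<open>M\<close> has derivative at most \<open>O(M/r)\<close> at the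
  centre. Hence \<open>F'/F = g' \<ll> \<L> log \<L>\<close>. Only (I1) and (I2) enter.
\<close>

lemma norm_le_norm_add_of_Re_ge:
  fixes u :: complex and c :: real
  assumes "0 \<le> c" and "- c / 2 \<le> Re u"
  shows "norm u \<le> norm (u + c)"
proof -
  have "(Re u + c)\<^sup>2 - (Re u)\<^sup>2 = 2 * c * (Re u + c / 2)"
    by (simp add: power2_eq_square algebra_simps)
  also have "\<dots> \<ge> 0"
    using assms by simp
  finally show ?thesis
    by (simp add: cmod_def)
qed

text \<open>
  The real part of \<open>u = g - g z\<^sub>0\<close> stays in \<open>[-2M, 2M]\<close>, so the Moebius map
  \<open>u/(u + 4M)\<close> sends the disc into the closed unit disc; the Cauchy inequality bounds its
  derivative at \<open>z\<^sub>0\<close>, which is \<open>g'(z\<^sub>0)/(4M)\<close>.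
\<close>
lemma deriv_bound_of_Re_bounded:
  fixes g :: "complex \<Rightarrow> complex"
  assumes hol: "g holomorphic_on ball z0 R"
    and Re_bound: "\<And>z. z \<in> ball z0 R \<Longrightarrow> \<bar>Re (g z)\<bar> \<le> M"
    and "0 < M" and "0 < r" and "r < R"
  shows "norm (deriv g z0) \<le> 4 * M / r"
proof -
  have z0: "z0 \<in> ball z0 R"
    using assms by simp
  define u where "u z = g z - g z0" for z
  define \<phi> where "\<phi> z = u z / (u z + 4 * M)" for z
  have Re_u: "- 2 * M \<le> Re (u z)" if "z \<in> ball z0 R" for z
    using Re_bound[OF that] Re_bound[OF z0] by (simp add: u_def)
  have den_nz: "u z + 4 * M \<noteq> 0" if "z \<in> ball z0 R" for z
  proof
    assume "u z + 4 * M = 0"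
    then have "Re (u z + 4 * M) = 0"
      by simp
    with Re_u[OF that] \<open>0 < M\<close> show False
      by simp
  qed
  have "\<phi> holomorphic_on ball z0 R"
    using den_nz unfolding \<phi>_def u_def by (intro holomorphic_intros hol) auto
  then have "\<phi> holomorphic_on cball z0 r"
    by (rule holomorphic_on_subset) (use \<open>r < R\<close> in auto)
  moreover have "norm (\<phi> z) \<le> 1" if "z \<in> ball z0 R" for z
  proof -
    have "norm (u z) \<le> norm (u z + of_real (4 * M))"
      using Re_u[OF that] \<open>0 < M\<close> by (intro norm_le_norm_add_of_Re_ge) auto
    then show ?thesis
      using den_nz[OF that] by (simp add: \<phi>_def norm_divide divide_le_eq_1)
  qed
  ultimately have "norm ((deriv ^^ 1) \<phi> z0) \<le> fact 1 * 1 / r ^ 1"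
    using \<open>0 < r\<close> \<open>r < R\<close>
    by (intro Cauchy_inequality)
       (auto simp: dist_norm holomorphic_on_imp_continuous_on
             intro: holomorphic_on_subset[OF _ ball_subset_cball])
  moreover have "(\<phi> has_field_derivative deriv g z0 / (4 * M)) (at z0)"
  proof -
    have "(u has_field_derivative deriv g z0) (at z0)"
      unfolding u_def using holomorphic_derivI[OF hol open_ball z0]
      by (auto intro!: derivative_eq_intros)
    then have "(\<phi> has_field_derivative
        (deriv g z0 * (u z0 + 4 * M) - u z0 * deriv g z0) / (u z0 + 4 * M)\<^sup>2) (at z0)"
      unfolding \<phi>_def[abs_def] using den_nz[OF z0]
      by (auto intro!: derivative_eq_intros simp: power2_eq_square)
    then show ?thesis
      using \<open>0 < M\<close> by (simp add: u_def power2_eq_square field_simps)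
  qed
  ultimately have "norm (deriv g z0) / (4 * M) \<le> 1 / r"
    using \<open>0 < M\<close> by (simp add: DERIV_imp_deriv norm_divide)
  then show ?thesis
    using \<open>0 < M\<close> \<open>0 < r\<close> by (simp add: field_simps)
qed

lemma logderiv_bound_of_ln_norm_bounded:
  fixes f :: "complex \<Rightarrow> complex"
  assumes hol: "f holomorphic_on ball z0 R"
    and nz: "\<And>z. z \<in> ball z0 R \<Longrightarrow> f z \<noteq> 0"
    and ln_bound: "\<And>z. z \<in> ball z0 R \<Longrightarrow> \<bar>ln (norm (f z))\<bar> \<le> M"
    and "0 < M" and "0 < r" and "r < R"
  shows "norm (deriv f z0 / f z0) \<le> 4 * M / r"
proof -
  have z0: "z0 \<in> ball z0 R"
    using assms by simp
  obtain g where g: "g holomorphic_on ball z0 R"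
    and exp_g: "\<And>z. z \<in> ball z0 R \<Longrightarrow> exp (g z) = f z"
    using holomorphic_logarithm_exists[of "ball z0 R" f z0] hol nz z0 by auto
  have "\<bar>Re (g z)\<bar> \<le> M" if "z \<in> ball z0 R" for z
    using ln_bound[OF that] by (simp flip: exp_g[OF that] add: norm_exp_eq_Re)
  then have "norm (deriv g z0) \<le> 4 * M / r"
    using g assms by (intro deriv_bound_of_Re_bounded) auto
  moreover have "(f has_field_derivative exp (g z0) * deriv g z0) (at z0)"
  proof (rule has_field_derivative_transform_within_open[where f="\<lambda>z. exp (g z)" and S="ball z0 R"])
    show "((\<lambda>z. exp (g z)) has_field_derivative exp (g z0) * deriv g z0) (at z0)"
      using holomorphic_derivI[OF g open_ball z0] by (auto intro!: derivative_eq_intros)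
  qed (use z0 exp_g in auto)
  ultimately show ?thesis
    using exp_g[OF z0] nz[OF z0] by (simp add: DERIV_imp_deriv)
qed

lemma norm_bounds_of_near_inverse:
  fixes a b :: "'a :: real_normed_field"
  assumes sum: "norm a + norm b < B" and near: "norm (a * b - 1) < 1 / 2"
  shows "1 / (2 * B) < norm a" and "norm a < B"
proof -
  show "norm a < B"
    using sum norm_ge_zero[of b] by linarith
  have "norm b \<le> B" and "0 < B"
    using sum norm_ge_zero[of a] norm_ge_zero[of b] by linarith+
  have "1 - norm (a * b) \<le> norm (a * b - 1)"
    by (metis norm_minus_commute norm_one norm_triangle_ineq2)
  then have "1 / 2 < norm a * norm b"
    using near by (simp add: norm_mult)
  also have "\<dots> \<le> norm a * B"
    using \<open>norm b \<le> B\<close> by (simp add: mult_left_mono)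
  finally show "1 / (2 * B) < norm a"
    using \<open>0 < B\<close> by (simp add: field_simps)
qed

lemma ln_two_mul_cube_ln_le:
  fixes L :: real
  assumes "2 \<le> L"
  shows "ln (2 * (L^3 * ln L)) \<le> 5 * ln L"
proof -
  have "ln L \<le> L"
    using assms ln_le_minus_one[of L] by linarith
  then have "2 * (L^3 * ln L) \<le> L^5"
    using assms mult_mono[of 2 L "L^3 * ln L" "L^3 * L"]
    by (simp add: power_numeral_reduce mult_left_mono)
  then have "ln (2 * (L^3 * ln L)) \<le> ln (L^5)"
    using assms by (subst ln_le_cancel_iff) auto
  then show ?thesis
    using assms by (simp add: ln_realpow)
qed

lemma abs_ln_le_of_bounds:
  fixes x B K :: real
  assumes "0 < x" and "1 / (2 * B) < x" and "x < B" and "ln (2 * B) \<le> K"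
  shows "\<bar>ln x\<bar> \<le> K"
proof -
  have "0 < B"
    using assms by linarith
  have "ln x < ln B"
    using assms by simp
  also have "\<dots> \<le> ln (2 * B)"
    using \<open>0 < B\<close> by simp
  finally have "ln x < K"
    using assms by linarith
  have "- ln (2 * B) = ln (1 / (2 * B))"
    using \<open>0 < B\<close> by (simp add: ln_div)
  also have "\<dots> < ln x"
    using assms \<open>0 < B\<close> by simp
  finally have "- ln (2 * B) < ln x" .
  with \<open>ln x < K\<close> show ?thesis
    using assms by linarith
qed

lemma PsiStar_FF_bounds:
  assumes "\<psi> \<in> PsiStar D chi" and "z \<in> Omega1 D"
  shows "1 / (2 * ((LL D)^3 * ln (LL D))) < norm (FF D chi \<psi> z)"
    and "norm (FF D chi \<psi> z) < (LL D)^3 * ln (LL D)"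
proof -
  have "ereal (norm (FF D chi \<psi> z) + norm (GG D chi \<psi> z))
      \<le> (SUP s\<in>Omega1 D. ereal (norm (FF D chi \<psi> s) + norm (GG D chi \<psi> s)))"
    using assms(2) by (rule SUP_upper)
  also have "\<dots> < ereal ((LL D)^3 * ln (LL D))"
    using assms(1) by (simp add: PsiStar_def)
  finally have sum: "norm (FF D chi \<psi> z) + norm (GG D chi \<psi> z) < (LL D)^3 * ln (LL D)"
    by simp
  have "ereal (norm (FF D chi \<psi> z * GG D chi \<psi> z - 1))
      \<le> (SUP s\<in>Omega1 D. ereal (norm (FF D chi \<psi> s * GG D chi \<psi> s - 1)))"
    using assms(2) by (rule SUP_upper)
  also have "\<dots> < ereal (1 / 2)"
    using assms(1) by (simp add: PsiStar_def)
  finally have "norm (FF D chi \<psi> z * GG D chi \<psi> z - 1) < 1 / 2"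
    by simp
  with sum show "1 / (2 * ((LL D)^3 * ln (LL D))) < norm (FF D chi \<psi> z)"
    and "norm (FF D chi \<psi> z) < (LL D)^3 * ln (LL D)"
    by (rule norm_bounds_of_near_inverse)+
qed

lemma PsiStar_ln_norm_FF_bound:
  assumes "\<psi> \<in> PsiStar D chi" and "z \<in> Omega1 D" and L: "2 \<le> LL D"
  shows "FF D chi \<psi> z \<noteq> 0" and "\<bar>ln (norm (FF D chi \<psi> z))\<bar> \<le> 5 * ln (LL D)"
proof -
  have "0 < 1 / (2 * ((LL D)^3 * ln (LL D)))"
    using L by simp
  then show "FF D chi \<psi> z \<noteq> 0" and "\<bar>ln (norm (FF D chi \<psi> z))\<bar> \<le> 5 * ln (LL D)"
    using PsiStar_FF_bounds[OF assms(1,2)] ln_two_mul_cube_ln_le[OF L]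
    by (auto intro!: abs_ln_le_of_bounds)
qed

lemma ball_subset_Omega1:
  assumes L: "LL D \<ge> 2" and s: "s \<in> Omega2 D"
  shows "ball s (1 / LL D) \<subseteq> Omega1 D"
proof
  fix z assume z: "z \<in> ball s (1 / LL D)"
  define L where "L = LL D"
  have "L > 0"
    using L by (simp add: L_def)
  have alpha: "alpha D = 1 / L\<^sup>2"
    using \<open>L > 0\<close> by (simp add: alpha_def L_def powr_minus powr_realpow divide_inverse)
  have "norm (z - s) < 1 / L"
    using z by (simp add: L_def dist_norm norm_minus_commute)
  then have re: "\<bar>Re (z - s)\<bar> < 1 / L" and im: "\<bar>Im (z - s)\<bar> < 1 / L"
    using abs_Re_le_cmod[of "z - s"] abs_Im_le_cmod[of "z - s"] by linarith+
  have "(1/10) * alpha D * ln L = ln L / (10 * L\<^sup>2)"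
    using alpha by simp
  also have "\<dots> \<le> L / (10 * L\<^sup>2)"
    using \<open>L > 0\<close> ln_le_minus_one[of L] by (intro divide_right_mono) auto
  also have "\<dots> \<le> 1 / L"
    using \<open>L > 0\<close> by (simp add: power2_eq_square field_simps)
  finally have "(1/10) * alpha D * ln L \<le> 1 / L" .
  moreover have "1 / L \<le> 1 / 2"
    using L by (simp add: L_def)
  moreover have "1 / L \<le> 10 * L"
  proof -
    have "2 * 2 \<le> L * L"
      using L by (intro mult_mono) (auto simp: L_def)
    then show ?thesis
      using \<open>L > 0\<close> by (simp add: field_simps)
  qed
  moreover have "- (1/10) * alpha D * ln L < Re (s - s0 D)" "Re (s - s0 D) < 1/2"
      "\<bar>Im (s - s0 D)\<bar> < 1 + 10 * L"
    using s by (simp_all add: Omega2_def L_def)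
  moreover have "Re (z - s0 D) = Re (s - s0 D) + Re (z - s)"
      "Im (z - s0 D) = Im (s - s0 D) + Im (z - s)"
    by simp_all
  ultimately have "- 2 * (1 / L) < Re (z - s0 D)" "Re (z - s0 D) < 1"
      "\<bar>Im (z - s0 D)\<bar> < 1 + 20 * L"
    using re im by linarith+
  moreover have "sqrt (alpha D) = 1 / L"
    using alpha \<open>L > 0\<close> by (simp add: real_sqrt_divide)
  ultimately show "z \<in> Omega1 D"
    by (simp add: Omega1_def L_def)
qed

lemma LL_ge_two:
  assumes "exp 2 \<le> real D"
  shows "2 \<le> LL D"
proof -
  have "0 < real D"
    using assms exp_gt_zero[of 2] by linarith
  then have "ln (exp 2) \<le> ln (real D)"
    using assms by (subst ln_le_cancel_iff) simp_all
  then show ?thesis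
    by (simp add: LL_def)
qed

theorem lemma2p8:
  shows "\<exists>C D0::real. \<forall>(D::nat) (chi::nat \<Rightarrow> complex) (\<psi>::nat \<Rightarrow> complex) (s::complex).
           real D \<ge> D0 \<longrightarrow> real_primitive_char D chi \<longrightarrow> \<psi> \<in> PsiStar D chi \<longrightarrow> s \<in> Omega2 D \<longrightarrow>
           norm (deriv (FF D chi \<psi>) s / FF D chi \<psi> s) \<le> C * LL D * ln (LL D)"
proof (intro exI allI impI)
  fix D :: nat and chi \<psi> :: "nat \<Rightarrow> complex" and s :: complex
  assume D: "real D \<ge> exp 2" and \<psi>: "\<psi> \<in> PsiStar D chi" and s: "s \<in> Omega2 D"
  have L: "2 \<le> LL D"
    using D by (rule LL_ge_two)
  have "FF D chi \<psi> holomorphic_on ball s (1 / LL D)"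
    unfolding FF_def by (intro holomorphic_intros) auto
  moreover have "FF D chi \<psi> z \<noteq> 0" and "\<bar>ln (norm (FF D chi \<psi> z))\<bar> \<le> 5 * ln (LL D)"
    if "z \<in> ball s (1 / LL D)" for z
    using PsiStar_ln_norm_FF_bound \<psi> ball_subset_Omega1[OF L s] that L by blast+
  ultimately have "norm (deriv (FF D chi \<psi>) s / FF D chi \<psi> s)
      \<le> 4 * (5 * ln (LL D)) / (1 / (2 * LL D))"
    using L by (intro logderiv_bound_of_ln_norm_bounded) (auto simp: field_simps)
  then show "norm (deriv (FF D chi \<psi>) s / FF D chi \<psi> s) \<le> 40 * LL D * ln (LL D)"
    using L by (simp add: field_simps)
qed

end
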